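(* Let $f=1-xy$, $g=1-xy^2$, $h=1-y$ in $\mathbb{Z}[x,y]$. There exist polynomials $\xi_m\in\mathbb{Z}[x,y]$ for all integers $m\geq1$ such that (1) (a) $\xi_1=g$; (b) $\xi_{m+1}=f\xi_m+x^mh^{m+1}$; (c) $\xi_{m+1}=xh\xi_m+f^{m+1}$; (2) $\xi_m$ vanishes to order $m$ at $t_0=(1,1)$; (3) the Newton polygon of $\xi_m$ is the triangle with vertices $(0,0)$, $(m-1,0)$, $(m,m+1)$; (4) $\xi_m$ is irreducible in $K[x,y]$ for every field $K$.
   Context: The Newton polygon of a polynomial is the convex hull of the exponent vectors of the monomials appearing with nonzero coefficient. *)

theory Defs
  imports "HOL-Analysis.Analysis" "HOL-Computational_Algebra.Polynomial"
begin

text \<open>Bivariate polynomials R[x,y] are represented as R[x][y], i.e. as 'a poly poly: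
  coeff (coeff p j) i is the coefficient of the monomial x^i y^j.\<close>

definition varX :: "'a::comm_ring_1 poly poly" where
  "varX = [:[:0, 1:]:]"

definition varY :: "'a::comm_ring_1 poly poly" where
  "varY = [:0, 1:]"

definition support2 :: "'a::zero poly poly \<Rightarrow> (nat \<times> nat) set" where
  "support2 p = {(i, j). coeff (coeff p j) i \<noteq> 0}"

definition newton_polygon :: "'a::zero poly poly \<Rightarrow> (real \<times> real) set" where
  "newton_polygon p = convex hull ((\<lambda>(i, j). (real i, real j)) ` support2 p)"

text \<open>Translate the point (a,b) to the origin: p(x+a, y+b).\<close>
definition shift2 :: "'a::comm_ring_1 \<Rightarrow> 'a \<Rightarrow> 'a poly poly \<Rightarrow> 'a poly poly" where
  "shift2 a b p = pcompose (map_poly (\<lambda>c. pcompose c [:a, 1:]) p) [:[:b:], 1:]"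

definition vanishes_to_order :: "'a::comm_ring_1 poly poly \<Rightarrow> 'a \<Rightarrow> 'a \<Rightarrow> nat \<Rightarrow> bool" where
  "vanishes_to_order p a b m \<longleftrightarrow>
     (\<forall>(i, j) \<in> support2 (shift2 a b p). m \<le> i + j) \<and>
     (\<exists>(i, j) \<in> support2 (shift2 a b p). i + j = m)"

end

theory Submission
  imports Defs
begin

text \<open>
  Multiplied by \<open>1 - x\<close>, both recurrences say that
  \<open>(1 - x) \<xi>\<^sub>m = f^(m+1) - x^m h^(m+1)\<close>, so \<open>\<xi>\<^sub>m\<close> is this quotient; expanding it
  shows that its monomials are the \<open>x^i y^j\<close> with \<open>j \<le> i < m\<close>, and \<open>x^m y^(m+1)\<close>.
  Translating \<open>(1,1)\<close> to the origin turns \<open>-x \<xi>\<^sub>m\<close> into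
  \<open>(-(x + y + xy))^(m+1) - (x + 1)^m (-y)^(m+1)\<close>, which vanishes to order \<open>m + 1\<close>
  and contains the monomial \<open>(-x)^(m+1)\<close>.

  For irreducibility, regard \<open>\<xi>\<^sub>m\<close> as a polynomial in \<open>y\<close> over \<open>K[x]\<close>. Its
  \<open>x\<close>-adic Newton polygon is the single segment from \<open>(0,0)\<close> to \<open>(m+1,m)\<close>, which
  contains no other lattice point. The minimal weight \<open>(m+1) ord\<^sub>x(c\<^sub>k) - m k\<close> of the
  coefficients \<open>c\<^sub>k\<close> is attained additively by products, so a factorisation into
  factors of positive \<open>y\<close>-degree would split the segment at a lattice point. Factors
  of \<open>y\<close>-degree 0 divide both \<open>\<plusminus>x^m\<close> and a polynomial with nonzero constant
  term, hence are units.
\<close>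

section \<open>The polynomials \<open>\<xi>\<^sub>m\<close> and their recurrences\<close>

definition xi :: "nat \<Rightarrow> 'a::comm_ring_1 poly poly" where
  "xi m = (\<Sum>j<m. of_int ((-1)^j * int (Suc m choose j)) * (\<Sum>i=j..<m. varX^i) * varY^j)
          + (-1)^m * varX^m * varY^Suc m"

lemma one_minus_mult_sum_power_atLeastLessThan:
  fixes x :: "'a::comm_ring_1"
  assumes "j \<le> m"
  shows "(1 - x) * (\<Sum>i=j..<m. x^i) = x^j - x^m"
proof (cases "j = m")
  case False
  with assms have "{j..<m} = {j..m - 1}" and "Suc (m - 1) = m" by auto
  then show ?thesis by (metis sum_gp_multiplied assms False le_neq_implies_less less_Suc_eq_le)
qed simp

lemma one_minus_power_binomial:
  fixes a :: "'a::comm_ring_1"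
  shows "(1 - a)^n = (\<Sum>k\<le>n. of_int ((-1)^k * int (n choose k)) * a^k)"
  using binomial_ring[of "-a" 1 n] by (simp add: power_minus[of a] mult_ac)

lemma one_minus_varX_mult_xi:
  "(1 - varX) * xi m = (1 - varX * varY)^Suc m - varX^m * (1 - varY)^Suc m"
proof -
  define c :: "nat \<Rightarrow> 'a poly poly" where "c j = of_int ((-1)^j * int (Suc m choose j))" for j
  have low: "c j * (varX^j - varX^m) * varY^j
             = (1 - varX) * (c j * (\<Sum>i=j..<m. varX^i) * varY^j)" if "j < m" for j
    by (subst one_minus_mult_sum_power_atLeastLessThan[symmetric])
       (use that in \<open>simp_all add: mult_ac\<close>)
  have top: "c (Suc m) * (varX^Suc m - varX^m) * varY^Suc m
             = (1 - varX) * ((-1)^m * varX^m * varY^Suc m)"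
    by (simp add: c_def algebra_simps)
  have xi_c: "xi m = (\<Sum>j<m. c j * (\<Sum>i=j..<m. varX^i) * varY^j) + (-1)^m * varX^m * varY^Suc m"
    by (simp add: xi_def c_def)
  have "(1 - varX * varY)^Suc m - varX^m * (1 - varY)^Suc m
        = (\<Sum>j\<le>Suc m. c j * (varX^j - varX^m) * varY^j)"
    unfolding one_minus_power_binomial c_def
    by (simp add: sum_distrib_left algebra_simps sum_subtractf power_mult_distrib)
  also have "\<dots> = (\<Sum>j<m. c j * (varX^j - varX^m) * varY^j)
                   + c (Suc m) * (varX^Suc m - varX^m) * varY^Suc m"
    by (simp add: lessThan_Suc_atMost[symmetric])
  also have "\<dots> = (1 - varX) * xi m"
    unfolding xi_c distrib_left sum_distrib_left[of "1 - varX"] top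
    by (intro arg_cong2[where f = "(+)"] sum.cong refl) (simp add: low)
  finally show ?thesis ..
qed

lemma one_minus_varX_nonzero: "(1 - varX :: 'a::comm_ring_1 poly poly) \<noteq> 0"
proof
  assume "(1 - varX :: 'a poly poly) = 0"
  then have "coeff (coeff (1 - varX :: 'a poly poly) 0) 0 = 0" by simp
  then show False by (simp add: varX_def)
qed

lemma xi_eqI:
  fixes p :: "'a::idom poly poly"
  assumes "(1 - varX) * p = (1 - varX * varY)^Suc m - varX^m * (1 - varY)^Suc m"
  shows "xi m = p"
proof -
  have "(1 - varX) * xi m = (1 - varX) * p"
    by (simp only: one_minus_varX_mult_xi assms)
  then show ?thesis using one_minus_varX_nonzero[where 'a = 'a] by simp
qed

lemma xi_1: "xi 1 = (1 - varX * varY^2 :: 'a::idom poly poly)"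
  by (rule xi_eqI) (simp add: algebra_simps power2_eq_square)

lemma xi_Suc_mult_one_minus_XY:
  "(xi (Suc m) :: 'a::idom poly poly) = (1 - varX * varY) * xi m + varX^m * (1 - varY)^Suc m"
proof -
  have "(1 - varX) * ((1 - varX * varY) * xi m + varX^m * (1 - varY)^Suc m)
        = (1 - varX * varY) * ((1 - varX) * xi m) + (1 - varX) * varX^m * (1 - varY)^Suc m"
    by (simp add: algebra_simps)
  also have "\<dots> = (1 - varX * varY)^Suc (Suc m) - varX^Suc m * (1 - varY)^Suc (Suc m)"
    unfolding one_minus_varX_mult_xi by (simp add: algebra_simps)
  finally show ?thesis by (rule xi_eqI)
qed

lemma xi_Suc_mult_X_one_minus_Y:
  "(xi (Suc m) :: 'a::idom poly poly) = varX * (1 - varY) * xi m + (1 - varX * varY)^Suc m"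
proof -
  have "(1 - varX) * (varX * (1 - varY) * xi m + (1 - varX * varY)^Suc m)
        = varX * (1 - varY) * ((1 - varX) * xi m) + (1 - varX) * (1 - varX * varY)^Suc m"
    by (simp add: algebra_simps)
  also have "\<dots> = (1 - varX * varY)^Suc (Suc m) - varX^Suc m * (1 - varY)^Suc (Suc m)"
    unfolding one_minus_varX_mult_xi by (simp add: algebra_simps)
  finally show ?thesis by (rule xi_eqI)
qed

section \<open>Coefficients and Newton polygon\<close>

definition xi_coeff :: "nat \<Rightarrow> nat \<Rightarrow> nat \<Rightarrow> int" where
  "xi_coeff m i j =
     (if j \<le> i \<and> i < m then (-1)^j * int (Suc m choose j)
      else if i = m \<and> j = Suc m then (-1)^m else 0)"

lemma varX_power: "(varX :: 'a::comm_ring_1 poly poly)^i = monom (monom 1 i) 0"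
  by (induction i) (auto simp: varX_def mult_monom monom_0 one_pCons monom_Suc)

lemma varY_power: "(varY :: 'a::comm_ring_1 poly poly)^j = monom 1 j"
proof -
  have Y: "(varY :: 'a poly poly) = monom 1 1"
    by (simp add: varY_def monom_Suc monom_0 one_pCons)
  show ?thesis by (simp only: Y monom_power power_one mult_1)
qed

lemma of_int_mult_varX_varY_power:
  "of_int c * varX^i * varY^j = (monom (monom (of_int c) i) j :: 'a::comm_ring_1 poly poly)"
  by (simp add: varX_power varY_power of_int_poly mult_monom smult_monom monom_0[symmetric])

lemma coeff_coeff_xi: "coeff (coeff (xi m) j) i = (of_int (xi_coeff m i j) :: 'a::comm_ring_1)"
proof -
  have row: "of_int c * (\<Sum>i=j..<m. varX^i) * varY^j
             = (\<Sum>i=j..<m. monom (monom (of_int c) i) j :: 'a poly poly)" for c j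
    by (simp add: sum_distrib_left sum_distrib_right flip: of_int_mult_varX_varY_power)
  have top: "(-1)^m * varX^m * varY^Suc m = (monom (monom ((-1)^m) m) (Suc m) :: 'a poly poly)"
    using of_int_mult_varX_varY_power[of "(-1)^m" m "Suc m"] by simp
  have "xi m = (\<Sum>j<m. \<Sum>i=j..<m. monom (monom (of_int ((-1)^j * int (Suc m choose j))) i) j)
             + (monom (monom ((-1)^m) m) (Suc m) :: 'a poly poly)"
    unfolding xi_def row top ..
  moreover have "coeff (\<Sum>j'<m. \<Sum>i'=j'..<m. monom (monom (b j') i') j') j
                  = (if j < m then \<Sum>i'=j..<m. monom (b j) i' else 0)" for b :: "nat \<Rightarrow> 'a"
    by (simp add: coeff_sum coeff_monom sum.delta flip: monom_sum)
  moreover have "coeff (\<Sum>i'=j..<m. monom (b :: 'a) i') i = (if j \<le> i \<and> i < m then b else 0)" for b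
    by (simp add: coeff_sum coeff_monom)
  ultimately show ?thesis
    by (auto simp: coeff_monom xi_coeff_def)
qed

lemma map_poly_of_int_xi: "map_poly (map_poly of_int) (xi m :: int poly poly) = xi m"
  by (intro poly_eqI) (simp add: coeff_map_poly coeff_coeff_xi)

lemma support2_xi:
  "support2 (xi m :: 'a::{comm_ring_1,ring_char_0} poly poly)
     = {(i, j). j \<le> i \<and> i < m} \<union> {(m, Suc m)}"
  unfolding support2_def coeff_coeff_xi xi_coeff_def by auto

lemma below_diagonal_in_triangle:
  assumes "j \<le> i" "i < m"
  shows "(real i, real j) \<in> convex hull {(0, 0), (real m - 1, 0), (real m, real m + 1)}"
proof (cases "m = 1")
  case True
  with assms show ?thesis by (auto intro: hull_inc)
next
  case False
  with assms have m: "real m - 1 > 0" by simp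
  define w where "w = real j / (real m + 1)"
  define v where "v = (real i - w * real m) / (real m - 1)"
  have w0: "0 \<le> w" and wj: "w * (real m + 1) = real j"
    unfolding w_def by simp_all
  then have "w * real m + w = real j" by (simp add: algebra_simps)
  then have "w * real m \<le> real i" using w0 assms by linarith
  then have v0: "0 \<le> v" and vi: "v * (real m - 1) + w * real m = real i"
    unfolding v_def using m by simp_all
  have "(v + w) * (real m - 1) \<le> real m - 1"
    using vi w0 assms by (simp add: algebra_simps)
  then have "v + w \<le> 1" using m by simp
  then show ?thesis unfolding convex_hull_3
    using v0 w0 vi wj by (intro CollectI exI[of _ "1 - v - w"] exI[of _ v] exI[of _ w]) (auto simp: algebra_simps)
qed

lemma newton_polygon_xi:
  assumes "1 \<le> m"
  shows "newton_polygon (xi m :: 'a::{comm_ring_1,ring_char_0} poly poly)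
           = convex hull {(0, 0), (real m - 1, 0), (real m, real m + 1)}"
proof -
  let ?T = "{(0, 0), (real m - 1, 0), (real m, real m + 1)} :: (real \<times> real) set"
  let ?S = "(\<lambda>(i, j). (real i, real j)) ` support2 (xi m :: 'a poly poly)"
  have S: "?S = (\<lambda>(i, j). (real i, real j)) ` {(i, j). j \<le> i \<and> i < m} \<union> {(real m, real m + 1)}"
    by (simp add: support2_xi add.commute)
  have "?S \<subseteq> convex hull ?T"
    unfolding S by (auto intro: hull_inc below_diagonal_in_triangle)
  moreover have "?T \<subseteq> ?S"
  proof -
    have "(0, 0) \<in> support2 (xi m :: 'a poly poly)" "(m - 1, 0) \<in> support2 (xi m :: 'a poly poly)"
      using assms by (simp_all add: support2_xi)
    then have "(real 0, real 0) \<in> ?S" "(real (m - 1), real 0) \<in> ?S"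
      by (auto intro: rev_image_eqI)
    then show ?thesis using assms unfolding S by (simp add: of_nat_diff)
  qed
  ultimately show ?thesis
    unfolding newton_polygon_def by (intro subset_antisym convex_hull_subset hull_mono)
qed

section \<open>Order of vanishing at \<open>(1,1)\<close>\<close>

lemma map_poly_pcompose_diff:
  fixes r :: "'a::comm_ring_1 poly"
  shows "map_poly (\<lambda>c. pcompose c r) (p - q)
     = map_poly (\<lambda>c. pcompose c r) p - map_poly (\<lambda>c. pcompose c r) q"
  by (rule poly_eqI) (simp add: coeff_map_poly pcompose_diff)

lemma map_poly_pcompose_mult:
  fixes r :: "'a::comm_ring_1 poly"
  shows "map_poly (\<lambda>c. pcompose c r) (p * q)
     = map_poly (\<lambda>c. pcompose c r) p * map_poly (\<lambda>c. pcompose c r) q"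
  by (rule poly_eqI) (simp add: coeff_map_poly coeff_mult pcompose_mult pcompose_sum)

lemma shift2_diff: "shift2 a b (p - q) = shift2 a b p - shift2 a b q"
  by (simp add: shift2_def map_poly_pcompose_diff pcompose_diff)

lemma shift2_mult: "shift2 a b (p * q) = shift2 a b p * shift2 a b q"
  by (simp add: shift2_def map_poly_pcompose_mult pcompose_mult)

lemma shift2_1: "shift2 a b 1 = 1"
  by (simp add: shift2_def pcompose_1)

lemma shift2_power: "shift2 a b (p ^ n) = shift2 a b p ^ n"
  by (induction n) (simp_all add: shift2_1 shift2_mult)

lemma shift2_varX: "shift2 a b varX = varX + [:[:a:]:]"
  by (simp add: shift2_def varX_def map_poly_pCons pcompose_pCons one_pCons)

lemma shift2_varY: "shift2 a b varY = varY + [:[:b:]:]"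
  by (simp add: shift2_def varY_def map_poly_pCons pcompose_pCons one_pCons)

definition monomials_degree_ge :: "nat \<Rightarrow> 'a::zero poly poly \<Rightarrow> bool" where
  "monomials_degree_ge d p \<longleftrightarrow> (\<forall>(i, j) \<in> support2 p. d \<le> i + j)"

lemma monomials_degree_ge_iff:
  "monomials_degree_ge d p \<longleftrightarrow> (\<forall>i j. coeff (coeff p j) i \<noteq> 0 \<longrightarrow> d \<le> i + j)"
  by (auto simp: monomials_degree_ge_def support2_def)

lemma monomials_degree_ge_0: "monomials_degree_ge 0 p"
  by (simp add: monomials_degree_ge_iff)

lemma monomials_degree_ge_mono:
  "monomials_degree_ge d p \<Longrightarrow> e \<le> d \<Longrightarrow> monomials_degree_ge e p"
  unfolding monomials_degree_ge_iff by force

lemma monomials_degree_ge_add: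
  "monomials_degree_ge d p \<Longrightarrow> monomials_degree_ge d q \<Longrightarrow> monomials_degree_ge d (p + q)"
  unfolding monomials_degree_ge_iff by (metis add.right_neutral coeff_add)

lemma monomials_degree_ge_uminus:
  "monomials_degree_ge d p \<Longrightarrow> monomials_degree_ge d (- p :: 'a::ab_group_add poly poly)"
  unfolding monomials_degree_ge_iff by simp

lemma monomials_degree_ge_diff:
  "monomials_degree_ge d p \<Longrightarrow> monomials_degree_ge d q
   \<Longrightarrow> monomials_degree_ge d (p - q :: 'a::ab_group_add poly poly)"
  using monomials_degree_ge_add[of d p "- q"] monomials_degree_ge_uminus[of d q] by simp

lemma monomials_degree_ge_mult:
  fixes p q :: "'a::comm_semiring_1 poly poly"
  assumes p: "monomials_degree_ge d p" and q: "monomials_degree_ge e q"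
  shows "monomials_degree_ge (d + e) (p * q)"
  unfolding monomials_degree_ge_iff
proof (intro allI impI)
  fix i j
  assume "coeff (coeff (p * q) j) i \<noteq> 0"
  then have "(\<Sum>k\<le>j. \<Sum>l\<le>i. coeff (coeff p k) l * coeff (coeff q (j - k)) (i - l)) \<noteq> 0"
    by (simp add: coeff_mult coeff_sum)
  then obtain k l where "k \<le> j" "l \<le> i"
      "coeff (coeff p k) l \<noteq> 0" "coeff (coeff q (j - k)) (i - l) \<noteq> 0"
    by (metis (no_types, lifting) atMost_iff mult_not_zero sum.neutral)
  with p q have "d \<le> l + k" "e \<le> (i - l) + (j - k)"
    unfolding monomials_degree_ge_iff by blast+
  with \<open>k \<le> j\<close> \<open>l \<le> i\<close> show "d + e \<le> i + j" by linarith
qed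

lemma monomials_degree_ge_power:
  "monomials_degree_ge d p \<Longrightarrow> monomials_degree_ge (n * d) (p ^ n)"
  for p :: "'a::comm_semiring_1 poly poly"
  by (induction n) (simp_all add: monomials_degree_ge_0 monomials_degree_ge_mult)

lemma monomials_degree_ge_varX: "monomials_degree_ge 1 (varX :: 'a::comm_ring_1 poly poly)"
  unfolding monomials_degree_ge_iff varX_def by (auto simp: coeff_pCons split: nat.splits)

lemma monomials_degree_ge_varY: "monomials_degree_ge 1 (varY :: 'a::comm_ring_1 poly poly)"
  unfolding monomials_degree_ge_iff varY_def by (auto simp: coeff_pCons split: nat.splits)

lemma coeff_coeff_varX_mult:
  "coeff (coeff (varX * p) j) i = (if i = 0 then 0 else coeff (coeff p j) (i - 1))"
  for p :: "'a::comm_ring_1 poly poly"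
  by (simp add: varX_def coeff_pCons split: nat.split)

lemma monomials_degree_ge_varX_mult_iff:
  "monomials_degree_ge (Suc d) (varX * p) \<longleftrightarrow> monomials_degree_ge d p"
  for p :: "'a::comm_ring_1 poly poly"
  unfolding monomials_degree_ge_iff
proof (intro iffI allI impI)
  fix i j
  assume deg: "\<forall>i j. coeff (coeff (varX * p) j) i \<noteq> 0 \<longrightarrow> Suc d \<le> i + j"
    and "coeff (coeff p j) i \<noteq> 0"
  then have "coeff (coeff (varX * p) j) (Suc i) \<noteq> 0" by (simp add: coeff_coeff_varX_mult)
  with deg show "d \<le> i + j" by fastforce
next
  fix i j
  assume deg: "\<forall>i j. coeff (coeff p j) i \<noteq> 0 \<longrightarrow> d \<le> i + j"
    and "coeff (coeff (varX * p) j) i \<noteq> 0"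
  then have "i \<noteq> 0" "coeff (coeff p j) (i - 1) \<noteq> 0"
    by (simp_all add: coeff_coeff_varX_mult split: if_splits)
  with deg show "Suc d \<le> i + j" by fastforce
qed

lemma varX_mult_shift2_xi:
  "- (varX * shift2 1 1 (xi m :: 'a::comm_ring_1 poly poly))
     = (- (varX + varY + varX * varY))^Suc m - (varX + 1)^m * (- varY)^Suc m"
proof -
  have "shift2 1 1 ((1 - varX) * xi m)
        = shift2 1 1 ((1 - varX * varY)^Suc m - varX^m * (1 - varY)^Suc m)"
    by (simp only: one_minus_varX_mult_xi)
  then have shifted: "(1 - (varX + 1)) * shift2 1 1 (xi m)
             = (1 - (varX + 1) * (varY + 1))^Suc m - (varX + 1)^m * (1 - (varY + 1))^Suc m"
    unfolding shift2_mult shift2_diff shift2_power shift2_1 shift2_varX shift2_varY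
    by (simp only: one_pCons[symmetric])
  have "(1 - (varX + 1)) * p = - (varX * p)" for p :: "'a poly poly"
    by (simp add: algebra_simps)
  moreover have "1 - (varX + 1) * (varY + 1) = - (varX + varY + varX * (varY :: 'a poly poly))"
    and "1 - (varY + 1) = - (varY :: 'a poly poly)"
    by (simp_all add: algebra_simps)
  ultimately show ?thesis using shifted by metis
qed

lemma monomials_degree_ge_shift2_xi:
  "monomials_degree_ge m (shift2 1 1 (xi m :: 'a::comm_ring_1 poly poly))"
proof -
  have "monomials_degree_ge 1 (- (varX + varY + varX * (varY :: 'a poly poly)))"
    using monomials_degree_ge_mult[OF monomials_degree_ge_varX monomials_degree_ge_varY]
    by (intro monomials_degree_ge_uminus monomials_degree_ge_add monomials_degree_ge_varX
        monomials_degree_ge_varY) (auto elim: monomials_degree_ge_mono)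
  then have "monomials_degree_ge (Suc m) ((- (varX + varY + varX * (varY :: 'a poly poly)))^Suc m)"
    using monomials_degree_ge_power[of 1 _ "Suc m"] by simp
  moreover have "monomials_degree_ge (Suc m) ((varX + 1)^m * (- (varY :: 'a poly poly))^Suc m)"
    using monomials_degree_ge_mult[OF monomials_degree_ge_0
        monomials_degree_ge_power[OF monomials_degree_ge_uminus[OF monomials_degree_ge_varY]],
        of "Suc m" "(varX + 1)^m"]
    by simp
  ultimately have "monomials_degree_ge (Suc m) (- (varX * shift2 1 1 (xi m :: 'a poly poly)))"
    unfolding varX_mult_shift2_xi by (rule monomials_degree_ge_diff)
  then show ?thesis
    using monomials_degree_ge_uminus monomials_degree_ge_varX_mult_iff by fastforce
qed

lemma coeff_coeff_shift2_xi: "coeff (coeff (shift2 1 1 (xi m)) 0) m = ((-1)^m :: 'a::comm_ring_1)"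
proof -
  have "coeff (- (varX * shift2 1 1 (xi m :: 'a poly poly))) 0 = (- [:0, 1:])^Suc m"
    unfolding varX_mult_shift2_xi by (simp add: coeff_0_power varX_def varY_def)
  then have "- coeff (coeff (shift2 1 1 (xi m :: 'a poly poly)) 0) m
             = coeff ((- [:0, 1:])^Suc m) (Suc m)"
    by (metis coeff_minus coeff_coeff_varX_mult diff_Suc_1 nat.distinct(1))
  also have "\<dots> = (-1)^Suc m"
  proof -
    have "(- [:0, 1:] :: 'a poly) = monom (-1) 1" by (simp add: monom_Suc monom_0)
    then show ?thesis by (simp add: monom_power mult_monom)
  qed
  finally show ?thesis by simp
qed

lemma vanishes_to_order_xi: "vanishes_to_order (xi m :: 'a::comm_ring_1 poly poly) 1 1 m"
  unfolding vanishes_to_order_def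
proof (intro conjI)
  show "\<forall>(i, j) \<in> support2 (shift2 1 1 (xi m :: 'a poly poly)). m \<le> i + j"
    using monomials_degree_ge_shift2_xi unfolding monomials_degree_ge_def .
  show "\<exists>(i, j) \<in> support2 (shift2 1 1 (xi m :: 'a poly poly)). i + j = m"
  proof (intro bexI[of _ "(m, 0)"])
    have "((-1)^m :: 'a) \<noteq> 0" by (cases "even m") simp_all
    then show "(m, 0) \<in> support2 (shift2 1 1 (xi m :: 'a poly poly))"
      by (simp add: support2_def coeff_coeff_shift2_xi)
  qed simp
qed

section \<open>Irreducibility\<close>

text \<open>For \<open>p = \<Sum>\<^sub>k c\<^sub>k y\<^sup>k\<close> over \<open>K[x]\<close>, the weight of the point \<open>(k, ord\<^sub>x c\<^sub>k)\<close>
  relative to the line through \<open>(0,0)\<close> and \<open>(d,e)\<close>: the \<open>x\<close>-adic Newton polygon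
  of \<open>p\<close> lies on or above that line iff all weights are nonnegative.\<close>

definition newton_weight :: "nat \<Rightarrow> nat \<Rightarrow> 'a::idom poly poly \<Rightarrow> nat \<Rightarrow> int" where
  "newton_weight d e p k = int d * int (order 0 (coeff p k)) - int e * int k"

definition min_newton_weight :: "nat \<Rightarrow> nat \<Rightarrow> 'a::idom poly poly \<Rightarrow> int" where
  "min_newton_weight d e p = Min (newton_weight d e p ` {k. coeff p k \<noteq> 0})"

lemma finite_nonzero_coeffs: "finite {k. coeff p k \<noteq> 0}"
  by (rule finite_subset[of _ "{..degree p}"]) (auto intro: le_degree)

lemma min_newton_weight_le:
  "coeff p k \<noteq> 0 \<Longrightarrow> min_newton_weight d e p \<le> newton_weight d e p k"
  unfolding min_newton_weight_def by (rule Min_le) (simp_all add: finite_nonzero_coeffs)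

lemma first_min_newton_weight:
  assumes "p \<noteq> 0"
  obtains k where "coeff p k \<noteq> 0" "newton_weight d e p k = min_newton_weight d e p"
    "\<And>k'. k' < k \<Longrightarrow> coeff p k' \<noteq> 0 \<Longrightarrow> min_newton_weight d e p < newton_weight d e p k'"
proof -
  let ?M = "{k. coeff p k \<noteq> 0 \<and> newton_weight d e p k = min_newton_weight d e p}"
  have "{k. coeff p k \<noteq> 0} \<noteq> {}" using assms by (auto simp: poly_eq_iff)
  then have "min_newton_weight d e p \<in> newton_weight d e p ` {k. coeff p k \<noteq> 0}"
    unfolding min_newton_weight_def by (intro Min_in) (simp_all add: finite_nonzero_coeffs)
  then have "?M \<noteq> {}" by auto
  moreover have fin: "finite ?M"
    by (rule finite_subset[OF _ finite_nonzero_coeffs]) auto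
  ultimately have "Min ?M \<in> ?M" by (rule Min_in[rotated])
  moreover have "min_newton_weight d e p < newton_weight d e p k'"
    if "k' < Min ?M" "coeff p k' \<noteq> 0" for k'
  proof -
    have "k' \<notin> ?M" using that(1) Min_le[OF fin] by (meson leD)
    with that(2) show ?thesis using min_newton_weight_le[OF that(2), of d e] by auto
  qed
  ultimately show ?thesis using that by blast
qed

lemma order_0_add_higher:
  fixes a b :: "'a::idom poly"
  assumes a: "a \<noteq> 0" and b: "monom 1 (Suc (order 0 a)) dvd b"
  shows "a + b \<noteq> 0" and "order 0 (a + b) = order 0 a"
proof -
  have "monom 1 (order 0 a) dvd monom 1 (Suc (order 0 a))"
    by (simp add: monom_1_dvd_iff' coeff_monom)
  then have "monom 1 (order 0 a) dvd b" using b by (rule dvd_trans)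
  moreover have "monom 1 (order 0 a) dvd a"
    using monom_1_dvd_iff[OF a] by simp
  ultimately have low: "monom 1 (order 0 a) dvd a + b" by simp
  have "\<not> monom 1 (Suc (order 0 a)) dvd a"
    using monom_1_dvd_iff[OF a] by simp
  then have high: "\<not> monom 1 (Suc (order 0 a)) dvd a + b"
    by (simp add: dvd_add_left_iff[OF b])
  then show nz: "a + b \<noteq> 0" by auto
  from low high show "order 0 (a + b) = order 0 a"
    unfolding monom_1_dvd_iff[OF nz] by simp
qed

lemma newton_weight_mult_attains_min_sum:
  fixes A B :: "'a::idom poly poly"
  assumes d: "0 < d" and A: "A \<noteq> 0" and B: "B \<noteq> 0"
  obtains k where "coeff (A * B) k \<noteq> 0"
    "newton_weight d e (A * B) k = min_newton_weight d e A + min_newton_weight d e B"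
proof -
  obtain ka where ka: "coeff A ka \<noteq> 0" "newton_weight d e A ka = min_newton_weight d e A"
    "\<And>k. k < ka \<Longrightarrow> coeff A k \<noteq> 0 \<Longrightarrow> min_newton_weight d e A < newton_weight d e A k"
    using first_min_newton_weight[OF A] by blast
  obtain kb where kb: "coeff B kb \<noteq> 0" "newton_weight d e B kb = min_newton_weight d e B"
    "\<And>k. k < kb \<Longrightarrow> coeff B k \<noteq> 0 \<Longrightarrow> min_newton_weight d e B < newton_weight d e B k"
    using first_min_newton_weight[OF B] by blast
  define n where "n = ka + kb"
  define T where "T i = coeff A i * coeff B (n - i)" for i
  have weight_T: "newton_weight d e A i + newton_weight d e B (n - i)
                  = int d * int (order 0 (T i)) - int e * int n"
    if "i \<le> n" "T i \<noteq> 0" for i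
    using that by (simp add: newton_weight_def T_def order_mult algebra_simps of_nat_diff)
  have Tka: "T ka \<noteq> 0" using ka(1) kb(1) by (simp add: T_def n_def)
  have higher: "monom 1 (Suc (order 0 (T ka))) dvd T i" if i: "i \<in> {..n} - {ka}" for i
  proof (cases "T i = 0")
    case False
    then have a: "coeff A i \<noteq> 0" and b: "coeff B (n - i) \<noteq> 0" by (auto simp: T_def)
    have "newton_weight d e A ka + newton_weight d e B kb
          < newton_weight d e A i + newton_weight d e B (n - i)"
    proof (cases "i < ka")
      case True
      then show ?thesis
        using ka(2) ka(3)[OF True a] kb(2) min_newton_weight_le[OF b, of d e] by linarith
    next
      case False
      with i have "n - i < kb" by (auto simp: n_def)
      then show ?thesis
        using ka(2) kb(2) kb(3)[OF _ b] min_newton_weight_le[OF a, of d e] by linarith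
    qed
    then have "int d * int (order 0 (T ka)) < int d * int (order 0 (T i))"
      using weight_T[of ka] weight_T[of i] Tka False i by (simp add: n_def)
    then have "Suc (order 0 (T ka)) \<le> order 0 (T i)" using d by simp
    with False show ?thesis by (simp add: monom_1_dvd_iff)
  qed simp
  have "coeff (A * B) n = T ka + (\<Sum>i\<in>{..n} - {ka}. T i)"
    unfolding coeff_mult T_def by (subst sum.remove[of _ ka]) (auto simp: n_def)
  moreover have "monom 1 (Suc (order 0 (T ka))) dvd (\<Sum>i\<in>{..n} - {ka}. T i)"
    using higher by (intro dvd_sum) auto
  ultimately have "coeff (A * B) n \<noteq> 0" "order 0 (coeff (A * B) n) = order 0 (T ka)"
    using order_0_add_higher[OF Tka] by simp_all
  moreover have "newton_weight d e A ka + newton_weight d e B kb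
                  = int d * int (order 0 (T ka)) - int e * int n"
    using weight_T[of ka] Tka by (simp add: n_def)
  ultimately show ?thesis
    using that[of n] ka(2) kb(2) by (simp add: newton_weight_def)
qed

lemma is_unit_if_dvd_monom_and_nonroot:
  fixes a q :: "'k::field poly"
  assumes "a dvd monom c e" "c \<noteq> 0" "a dvd q" "poly q 0 \<noteq> 0"
  shows "is_unit a"
proof -
  obtain r where r: "monom c e = a * r" using assms(1) by blast
  with assms(2) have a: "a \<noteq> 0" and r0: "r \<noteq> 0" by auto
  from assms(3) obtain s where "q = a * s" by blast
  with assms(4) have "poly a 0 \<noteq> 0" by simp
  then have "order 0 a = 0" by (simp add: order_root)
  then have "order 0 r = e"
    using order_mult[of a r 0] a r0 assms(2) by (simp flip: r)
  then have "e \<le> degree r"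
  proof -
    have "monom 1 e dvd r" using monom_1_dvd_iff[OF r0, of e] \<open>order 0 r = e\<close> by simp
    then have "degree (monom (1 :: 'k) e) \<le> degree r" using r0 by (rule dvd_imp_degree_le)
    then show ?thesis by (simp add: degree_monom_eq)
  qed
  moreover have "degree a + degree r = e"
  proof -
    have "degree (monom c e) = e" using assms(2) by (rule degree_monom_eq)
    then show ?thesis unfolding r degree_mult_eq[OF a r0] .
  qed
  ultimately have "degree a = 0" by simp
  then show ?thesis using a by (simp add: is_unit_iff_degree)
qed

lemma constant_factor_is_unit:
  fixes P :: "'k::field poly poly"
  assumes "P = A * B" "degree A = 0"
    and "lead_coeff P = monom c e" "c \<noteq> 0" "poly (coeff P 0) 0 \<noteq> 0"
  shows "is_unit A"
proof -
  obtain a where A: "A = [:a:]" using assms(2) by (rule degree_eq_zeroE)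
  then have dvd: "a dvd coeff P k" for k using assms(1) by simp
  have "a dvd monom c e" using dvd[of "degree P"] assms(3) by simp
  then have "is_unit a"
    using assms(4) dvd[of 0] assms(5) by (rule is_unit_if_dvd_monom_and_nonroot)
  then show ?thesis by (simp add: A is_unit_const_poly_iff)
qed

lemma newton_segment_no_proper_factorization:
  fixes P A B :: "'k::field poly poly"
  assumes cop: "coprime (degree P) e"
    and lead: "order 0 (lead_coeff P) = e"
    and const: "poly (coeff P 0) 0 \<noteq> 0"
    and above: "\<And>k. coeff P k \<noteq> 0 \<Longrightarrow> e * k \<le> degree P * order 0 (coeff P k)"
    and P: "P = A * B" and dA: "0 < degree A" and dB: "0 < degree B"
  shows False
proof -
  define d where "d = degree P"
  have A: "A \<noteq> 0" and B: "B \<noteq> 0" using dA dB by auto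
  have deg: "degree A + degree B = d" using P A B by (simp add: d_def degree_mult_eq)
  have "order 0 (lead_coeff A) + order 0 (lead_coeff B) = e"
    using lead A B by (simp add: P lead_coeff_mult order_mult)
  then have top: "newton_weight d e A (degree A) + newton_weight d e B (degree B) = 0"
    using deg by (simp add: newton_weight_def algebra_simps flip: of_nat_add distrib_left)
  have "newton_weight d e A (degree A) \<noteq> 0"
    \<comment> \<open>the segment from \<open>(0,0)\<close> to \<open>(d,e)\<close> has no lattice point between its ends\<close>
  proof
    assume "newton_weight d e A (degree A) = 0"
    then have "d * order 0 (lead_coeff A) = e * degree A"
      unfolding newton_weight_def by (simp flip: of_nat_mult)
    then have "d dvd degree A"
      using cop by (metis coprime_dvd_mult_right_iff d_def dvd_triv_left)
    then show False using dA dB deg by (auto dest: dvd_imp_le)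
  qed
  moreover have "coeff P 0 = coeff A 0 * coeff B 0" by (simp add: P coeff_mult_0)
  with const have c0: "coeff A 0 \<noteq> 0" "coeff B 0 \<noteq> 0"
    and "order 0 (coeff A 0) = 0" "order 0 (coeff B 0) = 0"
    by (auto simp: order_root)
  then have "newton_weight d e A 0 = 0" "newton_weight d e B 0 = 0"
    by (simp_all add: newton_weight_def)
  ultimately have "min_newton_weight d e A + min_newton_weight d e B < 0"
    using top min_newton_weight_le[OF c0(1), of d e] min_newton_weight_le[OF c0(2), of d e]
      min_newton_weight_le[of A "degree A" d e] min_newton_weight_le[of B "degree B" d e] A B
    by force
  moreover have "0 < d" using deg dA by simp
  then obtain k where "coeff P k \<noteq> 0"
      "newton_weight d e P k = min_newton_weight d e A + min_newton_weight d e B"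
    using newton_weight_mult_attains_min_sum[OF _ A B] P by metis
  moreover have "0 \<le> newton_weight d e P k" if "coeff P k \<noteq> 0" for k
    using above[OF that] by (simp add: newton_weight_def d_def flip: of_nat_mult)
  ultimately show False by fastforce
qed

lemma irreducible_by_newton_segment:
  fixes P :: "'k::field poly poly"
  assumes deg: "0 < degree P" and cop: "coprime (degree P) e"
    and lead: "lead_coeff P = monom c e" "c \<noteq> 0"
    and const: "poly (coeff P 0) 0 \<noteq> 0"
    and above: "\<And>k. coeff P k \<noteq> 0 \<Longrightarrow> e * k \<le> degree P * order 0 (coeff P k)"
  shows "irreducible P"
proof (rule irreducibleI)
  show "P \<noteq> 0" using deg by auto
  show "\<not> is_unit P"
    using deg by (auto dest: dvd_imp_degree_le[where q = 1])
  fix A B assume P: "P = A * B"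
  have "order 0 (lead_coeff P) = e" using lead by simp
  then have "\<not> (0 < degree A \<and> 0 < degree B)"
    using newton_segment_no_proper_factorization[OF cop _ const above P] by blast
  then show "is_unit A \<or> is_unit B"
    using constant_factor_is_unit[OF P _ lead const]
      constant_factor_is_unit[of P B A, OF _ _ lead const] P
    by (auto simp: mult.commute)
qed

lemma irreducible_xi:
  assumes "1 \<le> m"
  shows "irreducible (xi m :: 'k::field poly poly)"
proof -
  have coeff_xi: "coeff (coeff (xi m) j) i = (of_int (xi_coeff m i j) :: 'k)" for i j
    by (rule coeff_coeff_xi)
  have lead: "coeff (xi m :: 'k poly poly) (Suc m) = monom ((-1)^m) m"
    by (rule poly_eqI) (simp add: coeff_xi coeff_monom xi_coeff_def)
  have "coeff (xi m :: 'k poly poly) j = 0" if "Suc m < j" for j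
    by (rule poly_eqI) (use that in \<open>auto simp: coeff_xi xi_coeff_def\<close>)
  then have "degree (xi m :: 'k poly poly) \<le> Suc m"
    by (intro degree_le) auto
  moreover have "Suc m \<le> degree (xi m :: 'k poly poly)"
    by (rule le_degree) (simp add: lead)
  ultimately have deg: "degree (xi m :: 'k poly poly) = Suc m" by simp
  have "m * k \<le> Suc m * order 0 (coeff (xi m :: 'k poly poly) k)"
    if nz: "coeff (xi m :: 'k poly poly) k \<noteq> 0" for k
  proof -
    have "monom 1 (min k m) dvd coeff (xi m :: 'k poly poly) k"
      unfolding monom_1_dvd_iff' by (auto simp: coeff_xi xi_coeff_def)
    then have ord: "min k m \<le> order 0 (coeff (xi m :: 'k poly poly) k)"
      using monom_1_dvd_iff[OF nz] by blast
    have "k \<le> Suc m" using le_degree[OF nz] deg by simp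
    then have "m * k \<le> Suc m * min k m"
      by (cases "k \<le> m") (auto simp: min_def le_Suc_eq)
    also have "\<dots> \<le> Suc m * order 0 (coeff (xi m :: 'k poly poly) k)"
      using ord by (rule mult_le_mono2)
    finally show ?thesis .
  qed
  moreover have "poly (coeff (xi m :: 'k poly poly) 0) 0 \<noteq> 0"
    using assms by (simp add: poly_0_coeff_0 coeff_xi xi_coeff_def)
  ultimately show ?thesis
    by (intro irreducible_by_newton_segment[of _ m "(-1)^m"]) (simp_all add: deg lead)
qed

theorem proposition3p1:
  fixes f g h :: "int poly poly"
  defines "f \<equiv> 1 - varX * varY"
      and "g \<equiv> 1 - varX * varY ^ 2"
      and "h \<equiv> 1 - varY"
  shows "\<exists>\<xi> :: nat \<Rightarrow> int poly poly.
           \<xi> 1 = g \<and>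
           (\<forall>m\<ge>1. \<xi> (m + 1) = f * \<xi> m + varX ^ m * h ^ (m + 1)) \<and>
           (\<forall>m\<ge>1. \<xi> (m + 1) = varX * h * \<xi> m + f ^ (m + 1)) \<and>
           (\<forall>m\<ge>1. vanishes_to_order (\<xi> m) 1 1 m) \<and>
           (\<forall>m\<ge>1. newton_polygon (\<xi> m) =
               convex hull {(0, 0), (real m - 1, 0), (real m, real m + 1)}) \<and>
           (\<forall>m\<ge>1. irreducible (map_poly (map_poly (of_int :: int \<Rightarrow> 'k::field)) (\<xi> m)))"
proof (intro exI[of _ xi] conjI allI impI)
  show "xi 1 = g" unfolding g_def by (rule xi_1)
  fix m :: nat assume m: "1 \<le> m"
  show "xi (m + 1) = f * xi m + varX ^ m * h ^ (m + 1)"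
    using xi_Suc_mult_one_minus_XY[of m] by (simp add: f_def h_def)
  show "xi (m + 1) = varX * h * xi m + f ^ (m + 1)"
    using xi_Suc_mult_X_one_minus_Y[of m] by (simp add: f_def h_def)
  show "vanishes_to_order (xi m :: int poly poly) 1 1 m" by (rule vanishes_to_order_xi)
  show "newton_polygon (xi m :: int poly poly)
          = convex hull {(0, 0), (real m - 1, 0), (real m, real m + 1)}"
    using m by (rule newton_polygon_xi)
  show "irreducible (map_poly (map_poly (of_int :: int \<Rightarrow> 'k)) (xi m :: int poly poly))"
    unfolding map_poly_of_int_xi using m by (rule irreducible_xi)
qed

end
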